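(* Fix an iteration $t$, an agent $p$, and a noise realization $\xi\in\mathbb{R}^{J\times K}$. Let $w^{t+1},\lambda^t_p,z^t_p\in\mathbb{R}^{J\times K}$, $\rho^t>0$, $\delta^t>0$ be given and $$\Phi(z)=\langle f'_p(z^t_p;\mathcal{D}_p),z\rangle+\tfrac{\rho^t}{2}\big\|w^{t+1}-z+\tfrac1{\rho^t}(\lambda^t_p-\xi)\big\|^2 .$$ Let $z^{t+1}_p(\mathcal{D}_p)=\operatorname{argmin}_{z\in\mathcal{W}\cap\widehat{\mathcal{W}}^t_p}\Phi(z)$ where $\widehat{\mathcal{W}}^t_p=\{z:\|z-z^t_p\|\le\delta^t\}$, and for $\ell>0$ let $z^{t+1}_p(\ell,\mathcal{D}_p)=\operatorname{argmin}_{z\in\mathbb{R}^{J\times K}}\Phi(z)+\sum_{m=1}^M\ln(1+e^{\ell h^t_m(z)})$. Then $\lim_{\ell\to\infty}z^{t+1}_p(\ell,\mathcal{D}_p)=z^{t+1}_p(\mathcal{D}_p)$.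
   Context: $\mathbb{R}^{J\times K}$ carries the Frobenius inner product and norm. $f_p(\cdot;\mathcal{D}_p)$ is the local empirical risk $\frac1I\sum_i\varphi(z;x_{pi},y_{pi})+\frac\beta Pr(z)$ (convex loss $\varphi$, convex regularizer $r$, $\beta>0$) and $f'_p(z^t_p;\mathcal{D}_p)$ a subgradient at $z^t_p$. $\mathcal{W}\subset\mathbb{R}^{J\times K}$ is compact convex, and $\mathcal{W}\cap\widehat{\mathcal{W}}^t_p=\{z:h^t_m(z)\le0,\ m\in[M]\}$ with each $h^t_m$ convex and twice continuously differentiable. Both problems have strongly convex objectives and unique minimizers. *)

theory Defs
  imports "HOL-Analysis.Analysis"
begin

text \<open>Matrices in R^{J x K} are modelled as real^'k^'j (J = CARD('j), K = CARD('k));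
  the inner product of this type is exactly the Frobenius inner product.\<close>

type_synonym ('j, 'k) mat = "real ^ 'k ^ 'j"

definition twice_cont_diff :: "('a::euclidean_space \<Rightarrow> real) \<Rightarrow> bool" where
  "twice_cont_diff h \<longleftrightarrow>
     (\<exists>(Df :: 'a \<Rightarrow> ('a \<Rightarrow>\<^sub>L real)) (D2f :: 'a \<Rightarrow> ('a \<Rightarrow>\<^sub>L ('a \<Rightarrow>\<^sub>L real))).
        (\<forall>z. (h has_derivative blinfun_apply (Df z)) (at z)) \<and>
        (\<forall>z. (Df has_derivative blinfun_apply (D2f z)) (at z)) \<and>
        continuous_on UNIV D2f)"

text \<open>The local objective Phi(z) = <g, z> + rho/2 * || w - z + (1/rho)(lam - xi) ||^2,
  where g is the subgradient f'_p(z^t_p; D_p).\<close>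
definition Phi :: "'a::real_inner \<Rightarrow> 'a \<Rightarrow> 'a \<Rightarrow> 'a \<Rightarrow> real \<Rightarrow> 'a \<Rightarrow> real" where
  "Phi g w lam xi rho z = inner g z + rho / 2 * (norm (w - z + (1 / rho) *\<^sub>R (lam - xi)))\<^sup>2"

definition softplus_penalty :: "(nat \<Rightarrow> 'a \<Rightarrow> real) \<Rightarrow> nat \<Rightarrow> real \<Rightarrow> 'a \<Rightarrow> real" where
  "softplus_penalty h M l z = (\<Sum>m\<in>{1..M}. ln (1 + exp (l * h m z)))"

end

theory Submission
  imports Defs
begin

(* Completing the square, Phi = rho/2 |z - u|^2 + const. The penalty P_l is convex, so the
   penalized objective is uniformly strongly convex and its minimizer z_l satisfies
   Phi(z_l) + P_l(z_l) + rho/4 |y - z_l|^2 <= Phi(y) + P_l(y) for all y; test this with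
   y = zstar + v/l. Since the h_m are convex and differentiable at zstar,
   P_l(x) >= T(l (x - zstar)) for the tangent penalty T(v), the sum of softplus(h_m'(zstar) v)
   over the constraints active at zstar, whereas P_l(zstar + v/l) -> T(v). Choosing T(v) close
   to inf T makes P_l(y) - P_l(z_l) asymptotically small. Finally Phi(z_l) > Phi(zstar) - eta
   eventually: the bound l h_m(z_l) <= P_l(z_l) = O(1) drives the constraint violation of z_l
   to 0, but the violation has a positive minimum on the compact sublevel set
   {Phi <= Phi(zstar) - eta}, which misses the feasible set. *)

definition softplus :: "real \<Rightarrow> real" where
  "softplus u = ln (1 + exp u)"

lemma softplus_nonneg: "0 \<le> softplus u"
  unfolding softplus_def by (simp add: add_pos_pos)

lemma softplus_ge_self: "u \<le> softplus u"
proof -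
  have "u = ln (exp u)" by simp
  also have "\<dots> \<le> ln (1 + exp u)" by (subst ln_le_cancel_iff) (auto simp: add_pos_pos)
  finally show ?thesis unfolding softplus_def .
qed

lemma softplus_mono: "u \<le> v \<Longrightarrow> softplus u \<le> softplus v"
  unfolding softplus_def by (subst ln_le_cancel_iff) (auto simp: add_pos_pos)

lemma softplus_le_ln2: "u \<le> 0 \<Longrightarrow> softplus u \<le> ln 2"
  unfolding softplus_def by (subst ln_le_cancel_iff) (auto simp: add_pos_pos)

lemma softplus_le_exp: "softplus u \<le> exp u"
  unfolding softplus_def by (rule ln_add_one_self_le_self) simp

lemma convex_on_softplus: "convex_on UNIV softplus"
proof (rule convex_on_realI)
  show "(softplus has_real_derivative exp x / (1 + exp x)) (at x)" for x
    unfolding softplus_def by (rule derivative_eq_intros refl | simp add: add_pos_pos)+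
  show "exp x / (1 + exp x) \<le> exp y / (1 + exp y)" if "x \<le> y" for x y :: real
    using that by (simp add: field_simps add_pos_pos)
qed simp

lemma continuous_on_softplus: "continuous_on UNIV softplus"
  by (rule convex_on_continuous[OF open_UNIV convex_on_softplus])

lemma softplus_penalty_eq: "softplus_penalty h M l x = (\<Sum>m\<in>{1..M}. softplus (l * h m x))"
  unfolding softplus_penalty_def softplus_def ..

lemma softplus_penalty_nonneg: "0 \<le> softplus_penalty h M l x"
  unfolding softplus_penalty_eq by (intro sum_nonneg) (simp add: softplus_nonneg)

lemma scaled_constraint_le_softplus_penalty:
  assumes "m \<in> {1..M}"
  shows "l * h m x \<le> softplus_penalty h M l x"
proof -
  from assms have "softplus (l * h m x) \<le> (\<Sum>m\<in>{1..M}. softplus (l * h m x))"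
    by (intro member_le_sum) (auto simp: softplus_nonneg)
  then show ?thesis
    unfolding softplus_penalty_eq using softplus_ge_self[of "l * h m x"] by linarith
qed

lemma softplus_penalty_le_of_feasible:
  assumes "l \<ge> 0" and "\<forall>m\<in>{1..M}. h m x \<le> 0"
  shows "softplus_penalty h M l x \<le> M * ln 2"
proof -
  have "softplus_penalty h M l x \<le> card {1..M} * ln 2"
    unfolding softplus_penalty_eq using assms
    by (intro sum_bounded_above softplus_le_ln2) (simp add: mult_nonneg_nonpos)
  then show ?thesis by simp
qed

lemma convex_on_softplus_penalty:
  assumes "l \<ge> 0" and "\<And>m. m \<in> {1..M} \<Longrightarrow> convex_on UNIV (h m)"
  shows "convex_on UNIV (softplus_penalty h M l)"
proof (rule convex_onI)
  fix t :: real and x y assume t: "0 < t" "t < 1"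
  have "softplus (l * h m ((1 - t) *\<^sub>R x + t *\<^sub>R y))
      \<le> (1 - t) * softplus (l * h m x) + t * softplus (l * h m y)" if m: "m \<in> {1..M}" for m
  proof -
    have "l * h m ((1 - t) *\<^sub>R x + t *\<^sub>R y) \<le> l * ((1 - t) * h m x + t * h m y)"
      using convex_onD[OF assms(2)[OF m], of t x y] t \<open>l \<ge> 0\<close> by (simp add: mult_left_mono)
    then have "softplus (l * h m ((1 - t) *\<^sub>R x + t *\<^sub>R y))
        \<le> softplus ((1 - t) * (l * h m x) + t * (l * h m y))"
      by (intro softplus_mono) (simp add: algebra_simps)
    also have "\<dots> \<le> (1 - t) * softplus (l * h m x) + t * softplus (l * h m y)"
      using convex_onD[OF convex_on_softplus, of t "l * h m x" "l * h m y"] t by simp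
    finally show ?thesis .
  qed
  then show "softplus_penalty h M l ((1 - t) *\<^sub>R x + t *\<^sub>R y)
      \<le> (1 - t) * softplus_penalty h M l x + t * softplus_penalty h M l y"
    unfolding softplus_penalty_eq sum_distrib_left sum.distrib[symmetric] by (rule sum_mono)
qed simp

lemma has_field_derivative_along_line:
  assumes "(f has_derivative D) (at a)"
  shows "((\<lambda>t. f (a + t *\<^sub>R v)) has_field_derivative D v) (at 0)"
proof -
  have "((\<lambda>t. a + t *\<^sub>R v) has_derivative (\<lambda>t. t *\<^sub>R v)) (at 0)"
    by (auto intro!: derivative_eq_intros)
  then have "((\<lambda>t. f (a + t *\<^sub>R v)) has_derivative (\<lambda>t. D (t *\<^sub>R v))) (at 0)"
    using has_derivative_compose[of "\<lambda>t. a + t *\<^sub>R v" _ 0 UNIV f D] assms by simp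
  moreover have "(\<lambda>t. D (t *\<^sub>R v)) = (*) (D v)"
    using linear_scale[OF has_derivative_linear[OF assms]] by (auto simp: fun_eq_iff)
  ultimately show ?thesis
    by (simp add: has_field_derivative_def)
qed

lemma convex_on_above_tangent:
  fixes f :: "'a::real_normed_vector \<Rightarrow> real"
  assumes "convex_on UNIV f" and "(f has_derivative D) (at a)"
  shows "f a + D (x - a) \<le> f x"
proof -
  define \<phi> where "\<phi> t = f (a + t *\<^sub>R (x - a))" for t
  have "convex_on UNIV \<phi>"
  proof (rule convex_onI)
    fix t s u :: real
    have "a + ((1 - u) *\<^sub>R t + u *\<^sub>R s) *\<^sub>R (x - a)
        = (1 - u) *\<^sub>R (a + t *\<^sub>R (x - a)) + u *\<^sub>R (a + s *\<^sub>R (x - a))"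
      by (simp add: algebra_simps)
    moreover assume "0 < u" "u < 1"
    ultimately show "\<phi> ((1 - u) *\<^sub>R t + u *\<^sub>R s) \<le> (1 - u) * \<phi> t + u * \<phi> s"
      unfolding \<phi>_def using convex_onD[OF assms(1)] by simp
  qed simp
  moreover have "(\<phi> has_field_derivative D (x - a)) (at 0 within UNIV)"
    unfolding \<phi>_def using has_field_derivative_along_line[OF assms(2)] by simp
  ultimately have "D (x - a) * (1 - 0) \<le> \<phi> 1 - \<phi> 0"
    by (intro convex_on_imp_above_tangent) auto
  then show ?thesis unfolding \<phi>_def by simp
qed

lemma tendsto_scaled_increment_at_top:
  assumes "(f has_derivative D) (at a)"
  shows "((\<lambda>l. l * (f (a + (1 / l) *\<^sub>R v) - f a)) \<longlongrightarrow> D v) at_top"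
proof -
  have "((\<lambda>t. (f (a + t *\<^sub>R v) - f a) / t) \<longlongrightarrow> D v) (at 0)"
    using has_field_derivative_along_line[OF assms, of v] by (simp add: has_field_derivative_iff)
  then have "((\<lambda>t. (f (a + t *\<^sub>R v) - f a) / t) \<longlongrightarrow> D v) (at_right 0)"
    by (rule tendsto_mono[rotated]) (simp add: at_le)
  from filterlim_compose[OF this filterlim_inverse_at_right_top]
  show ?thesis
    by (simp add: inverse_eq_divide mult.commute)
qed

lemma tendsto_line_at_top:
  fixes z v :: "'a::real_normed_vector"
  shows "((\<lambda>l. z + (1 / l) *\<^sub>R v) \<longlongrightarrow> z) at_top"
proof -
  have "((\<lambda>l. 1 / l) \<longlongrightarrow> (0::real)) at_top"
    by (rule tendsto_divide_0[OF tendsto_const filterlim_at_top_imp_at_infinity[OF filterlim_ident]])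
  from tendsto_add[OF tendsto_const tendsto_scaleR[OF this tendsto_const]]
  have "((\<lambda>l. z + (1 / l) *\<^sub>R v) \<longlongrightarrow> z + 0 *\<^sub>R v) at_top" .
  then show ?thesis by simp
qed

definition tangent_penalty ::
    "(nat \<Rightarrow> 'a::real_normed_vector \<Rightarrow> real) \<Rightarrow> nat \<Rightarrow> 'a \<Rightarrow> 'a \<Rightarrow> real"
  where "tangent_penalty h M z v =
    (\<Sum>m\<in>{1..M}. if h m z = 0 then softplus (frechet_derivative (h m) (at z) v) else 0)"

lemma tangent_penalty_nonneg: "0 \<le> tangent_penalty h M z v"
  unfolding tangent_penalty_def by (intro sum_nonneg) (simp add: softplus_nonneg)

lemma tangent_penalty_le_softplus_penalty:
  assumes "l \<ge> 0"
    and "\<And>m. m \<in> {1..M} \<Longrightarrow> convex_on UNIV (h m)"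
    and "\<And>m. m \<in> {1..M} \<Longrightarrow> h m differentiable at z"
  shows "tangent_penalty h M z (l *\<^sub>R (x - z)) \<le> softplus_penalty h M l x"
  unfolding tangent_penalty_def softplus_penalty_eq
proof (rule sum_mono)
  fix m assume m: "m \<in> {1..M}"
  define D where "D = frechet_derivative (h m) (at z)"
  have D: "(h m has_derivative D) (at z)"
    unfolding D_def using assms(3)[OF m] by (simp add: frechet_derivative_works)
  have "h m z = 0 \<Longrightarrow> D (l *\<^sub>R (x - z)) \<le> l * h m x"
    using convex_on_above_tangent[OF assms(2)[OF m] D, of x] \<open>l \<ge> 0\<close>
      linear_scale[OF has_derivative_linear[OF D]] by (simp add: mult_left_mono)
  then show "(if h m z = 0 then softplus (D (l *\<^sub>R (x - z))) else 0) \<le> softplus (l * h m x)"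
    by (auto intro: softplus_mono simp: softplus_nonneg)
qed

lemma tendsto_softplus_penalty_tangent_penalty:
  assumes "\<forall>m\<in>{1..M}. h m z \<le> 0"
    and "\<And>m. m \<in> {1..M} \<Longrightarrow> h m differentiable at z"
  shows "((\<lambda>l. softplus_penalty h M l (z + (1 / l) *\<^sub>R v)) \<longlongrightarrow> tangent_penalty h M z v)
    at_top"
  unfolding tangent_penalty_def softplus_penalty_eq
proof (rule tendsto_sum)
  fix m assume m: "m \<in> {1..M}"
  define D where "D = frechet_derivative (h m) (at z)"
  have D: "(h m has_derivative D) (at z)"
    unfolding D_def using assms(2)[OF m] by (simp add: frechet_derivative_works)
  show "((\<lambda>l. softplus (l * h m (z + (1 / l) *\<^sub>R v)))
      \<longlongrightarrow> (if h m z = 0 then softplus (D v) else 0)) at_top"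
  proof (cases "h m z = 0")
    case True
    with tendsto_scaled_increment_at_top[OF D, of v]
    have "((\<lambda>l. l * h m (z + (1 / l) *\<^sub>R v)) \<longlongrightarrow> D v) at_top" by simp
    with True show ?thesis
      by (auto intro: continuous_on_tendsto_compose[OF continuous_on_softplus])
  next
    case False
    with assms(1) m have "h m z < 0" by force
    have "isCont (h m) z"
      using assms(2)[OF m] by (rule differentiable_imp_continuous_within)
    then have "((\<lambda>l. h m (z + (1 / l) *\<^sub>R v)) \<longlongrightarrow> h m z) at_top"
      using tendsto_line_at_top by (rule isCont_tendsto_compose)
    from filterlim_tendsto_neg_mult_at_bot[OF this \<open>h m z < 0\<close> filterlim_ident]
    have "filterlim (\<lambda>l. l * h m (z + (1 / l) *\<^sub>R v)) at_bot at_top"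
      by (simp add: mult.commute)
    then have exp_lim: "((\<lambda>l. exp (l * h m (z + (1 / l) *\<^sub>R v))) \<longlongrightarrow> 0) at_top"
      by (rule filterlim_compose[OF exp_at_bot])
    have "((\<lambda>l. softplus (l * h m (z + (1 / l) *\<^sub>R v))) \<longlongrightarrow> 0) at_top"
      by (rule tendsto_sandwich[OF _ _ tendsto_const exp_lim]) (auto simp: softplus_nonneg softplus_le_exp)
    with False show ?thesis by simp
  qed
qed

lemma inner_plus_quadratic_complete_square:
  fixes g c x :: "'a::real_inner"
  assumes "\<rho> \<noteq> 0"
  shows "inner g x + \<rho> / 2 * (norm (c - x))\<^sup>2
    = \<rho> / 2 * (norm (x - (c - (1 / \<rho>) *\<^sub>R g)))\<^sup>2 + (inner g c - (norm g)\<^sup>2 / (2 * \<rho>))"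
  using assms unfolding power2_norm_eq_inner
  by (simp add: inner_diff_left inner_diff_right inner_add_left inner_add_right inner_commute
      field_simps power2_eq_square)

lemma norm_midpoint_diff_power2:
  fixes a b u :: "'a::real_inner"
  shows "(norm (midpoint a b - u))\<^sup>2
    = ((norm (a - u))\<^sup>2 + (norm (b - u))\<^sup>2) / 2 - (norm (a - b))\<^sup>2 / 4"
  unfolding power2_norm_eq_inner midpoint_def
  by (simp add: inner_diff_left inner_diff_right inner_add_left inner_add_right inner_commute
      field_simps)

lemma argmin_quadratic_plus_convex_growth:
  fixes f :: "'a::real_inner \<Rightarrow> real"
  assumes "convex_on UNIV f"
    and argmin: "\<And>y. c * (norm (a - u))\<^sup>2 + f a \<le> c * (norm (y - u))\<^sup>2 + f y"
  shows "c * (norm (a - u))\<^sup>2 + f a + c / 2 * (norm (y - a))\<^sup>2 \<le> c * (norm (y - u))\<^sup>2 + f y"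
proof -
  have "f (midpoint a y) \<le> (f a + f y) / 2"
    using convex_onD[OF assms(1), of "1/2" a y] by (simp add: midpoint_def scaleR_add_right)
  with argmin[of "midpoint a y", unfolded norm_midpoint_diff_power2 norm_minus_commute[of a y]]
  have "c * (norm (a - u))\<^sup>2 + f a
      \<le> c * (((norm (a - u))\<^sup>2 + (norm (y - u))\<^sup>2) / 2 - (norm (y - a))\<^sup>2 / 4) + (f a + f y) / 2"
    by linarith
  then show ?thesis
    by (simp add: field_simps)
qed

lemma real_le_rsqrt_iff: "(d::real) \<ge> 0 \<Longrightarrow> d\<^sup>2 \<le> s \<longleftrightarrow> d \<le> sqrt s"
  using real_le_rsqrt sqrt_ge_absD[of d s] by auto

lemma compact_quadratic_sublevel:
  fixes u :: "'a::euclidean_space"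
  assumes "c > 0"
  shows "compact {x. c * (norm (x - u))\<^sup>2 \<le> t}"
proof -
  have "c * (norm (x - u))\<^sup>2 \<le> t \<longleftrightarrow> norm (x - u) \<le> sqrt (t / c)" for x
  proof -
    have "c * (norm (x - u))\<^sup>2 \<le> t \<longleftrightarrow> (norm (x - u))\<^sup>2 \<le> t / c"
      using assms by (simp add: pos_le_divide_eq mult.commute)
    also have "\<dots> \<longleftrightarrow> norm (x - u) \<le> sqrt (t / c)"
      by (rule real_le_rsqrt_iff) simp
    finally show ?thesis .
  qed
  then have "{x. c * (norm (x - u))\<^sup>2 \<le> t} = cball u (sqrt (t / c))"
    by (simp add: cball_def dist_norm norm_minus_commute[of u])
  then show ?thesis by simp
qed

definition constraint_violation :: "(nat \<Rightarrow> 'a \<Rightarrow> real) \<Rightarrow> nat \<Rightarrow> 'a \<Rightarrow> real" where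
  "constraint_violation h M x = (\<Sum>m\<in>{1..M}. max 0 (h m x))"

lemma constraint_violation_nonneg: "0 \<le> constraint_violation h M x"
  unfolding constraint_violation_def by (intro sum_nonneg) simp

lemma feasible_if_constraint_violation_nonpos:
  assumes "constraint_violation h M x \<le> 0"
  shows "\<forall>m\<in>{1..M}. h m x \<le> 0"
proof -
  have "\<forall>m\<in>{1..M}. max 0 (h m x) = 0"
    using assms constraint_violation_nonneg[of h M x]
    unfolding constraint_violation_def by (simp add: sum_nonneg_eq_0_iff)
  then show ?thesis
    by (metis max.cobounded2)
qed

lemma continuous_on_constraint_violation:
  fixes h :: "nat \<Rightarrow> 'a::euclidean_space \<Rightarrow> real"
  assumes "\<And>m. m \<in> {1..M} \<Longrightarrow> convex_on UNIV (h m)"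
  shows "continuous_on S (constraint_violation h M)"
  unfolding constraint_violation_def using convex_on_continuous[OF open_UNIV assms]
  by (intro continuous_intros) (auto intro: continuous_on_subset)

lemma constraint_violation_le_softplus_penalty:
  assumes "l > 0"
  shows "constraint_violation h M x \<le> M * softplus_penalty h M l x / l"
proof -
  have "max 0 (h m x) \<le> softplus_penalty h M l x / l" if "m \<in> {1..M}" for m
    using scaled_constraint_le_softplus_penalty[OF that, where l = l and h = h and x = x]
      softplus_penalty_nonneg[of h M l x] assms
    by (simp add: pos_le_divide_eq mult.commute)
  then have "constraint_violation h M x \<le> card {1..M} * (softplus_penalty h M l x / l)"
    unfolding constraint_violation_def by (rule sum_bounded_above)
  then show ?thesis by simp
qed

lemma eventually_notin_compact:
  fixes V :: "'a::topological_space \<Rightarrow> real"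
  assumes "compact C" and "continuous_on C V" and "\<And>x. x \<in> C \<Longrightarrow> 0 < V x"
    and "((\<lambda>l. V (z l)) \<longlongrightarrow> 0) F"
  shows "eventually (\<lambda>l. z l \<notin> C) F"
proof (cases "C = {}")
  case False
  obtain x0 where x0: "x0 \<in> C" "\<And>x. x \<in> C \<Longrightarrow> V x0 \<le> V x"
    using continuous_attains_inf[OF assms(1) False assms(2)] by blast
  have "eventually (\<lambda>l. V (z l) < V x0) F"
    using order_tendstoD(2)[OF assms(4)] assms(3) x0(1) by blast
  then show ?thesis
    by eventually_elim (use x0(2) in force)
qed simp

locale softplus_penalty_method =
  fixes c :: real and u :: "'a::euclidean_space"
    and h :: "nat \<Rightarrow> 'a \<Rightarrow> real" and M :: nat
    and zstar :: 'a and z :: "real \<Rightarrow> 'a"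
  assumes c_pos: "c > 0"
    and convex_h: "\<And>m. m \<in> {1..M} \<Longrightarrow> convex_on UNIV (h m)"
    and differentiable_h: "\<And>m. m \<in> {1..M} \<Longrightarrow> h m differentiable at zstar"
    and zstar_argmin: "is_arg_min (\<lambda>x. c * (norm (x - u))\<^sup>2) (\<lambda>x. \<forall>m\<in>{1..M}. h m x \<le> 0) zstar"
    and z_argmin: "\<And>l. l > 0 \<Longrightarrow>
      is_arg_min (\<lambda>x. c * (norm (x - u))\<^sup>2 + softplus_penalty h M l x) (\<lambda>_. True) (z l)"
begin

abbreviation q :: "'a \<Rightarrow> real" where
  "q x \<equiv> c * (norm (x - u))\<^sup>2"

abbreviation P :: "real \<Rightarrow> 'a \<Rightarrow> real" where
  "P \<equiv> softplus_penalty h M"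

lemma zstar_feasible: "\<forall>m\<in>{1..M}. h m zstar \<le> 0"
  using zstar_argmin by (simp add: is_arg_min_linorder)

lemma zstar_argmin_le: "\<forall>m\<in>{1..M}. h m x \<le> 0 \<Longrightarrow> q zstar \<le> q x"
  using zstar_argmin by (simp add: is_arg_min_linorder)

lemma z_argmin_le: "l > 0 \<Longrightarrow> q (z l) + P l (z l) \<le> q x + P l x"
  using z_argmin by (simp add: is_arg_min_linorder)

lemma z_argmin_quadratic_growth:
  assumes "l > 0"
  shows "q (z l) + P l (z l) + c / 2 * (norm (y - z l))\<^sup>2 \<le> q y + P l y"
proof (rule argmin_quadratic_plus_convex_growth)
  show "convex_on UNIV (P l)"
    using convex_h \<open>l > 0\<close> by (intro convex_on_softplus_penalty) auto
qed (rule z_argmin_le[OF assms])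

lemma softplus_penalty_z_le:
  assumes "l > 0"
  shows "P l (z l) \<le> q zstar + M * ln 2"
proof -
  have "P l zstar \<le> M * ln 2"
    using assms zstar_feasible by (intro softplus_penalty_le_of_feasible) auto
  moreover have "0 \<le> q (z l)"
    using c_pos by simp
  ultimately show ?thesis
    using z_argmin_le[OF assms, of zstar] by linarith
qed

lemma tendsto_constraint_violation_z: "((\<lambda>l. constraint_violation h M (z l)) \<longlongrightarrow> 0) at_top"
proof (rule tendsto_sandwich[OF _ _ tendsto_const])
  define K where "K = M * (q zstar + M * ln 2)"
  show "eventually (\<lambda>l. constraint_violation h M (z l) \<le> K / l) at_top"
    using eventually_gt_at_top[of 0]
  proof eventually_elim
    fix l :: real assume "l > 0"
    then have "M * P l (z l) / l \<le> K / l"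
      unfolding K_def using softplus_penalty_z_le by (intro divide_right_mono mult_left_mono) auto
    with constraint_violation_le_softplus_penalty[OF \<open>l > 0\<close>]
    show "constraint_violation h M (z l) \<le> K / l"
      by (rule order_trans)
  qed
  show "((\<lambda>l. K / l) \<longlongrightarrow> 0) at_top"
    by (rule tendsto_divide_0[OF tendsto_const filterlim_at_top_imp_at_infinity[OF filterlim_ident]])
qed (auto intro: always_eventually constraint_violation_nonneg)

lemma eventually_objective_z_gt:
  assumes "\<eta> > 0"
  shows "eventually (\<lambda>l. q zstar - \<eta> < q (z l)) at_top"
proof -
  define C where "C = {x. q x \<le> q zstar - \<eta>}"
  have "0 < constraint_violation h M x" if "x \<in> C" for x
  proof (rule ccontr)
    assume "\<not> 0 < constraint_violation h M x"
    then have "q zstar \<le> q x"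
      by (intro zstar_argmin_le feasible_if_constraint_violation_nonpos) simp
    with that assms show False
      by (simp add: C_def)
  qed
  moreover have "compact C"
    unfolding C_def by (rule compact_quadratic_sublevel[OF c_pos])
  ultimately have "eventually (\<lambda>l. z l \<notin> C) at_top"
    using continuous_on_constraint_violation[OF convex_h] tendsto_constraint_violation_z
    by (intro eventually_notin_compact[of C "constraint_violation h M"]) auto
  then show ?thesis
    by eventually_elim (simp add: C_def)
qed

lemma inf_tangent_penalty_le_softplus_penalty:
  assumes "l > 0"
  shows "(INF v. tangent_penalty h M zstar v) \<le> P l x"
proof -
  have "(INF v. tangent_penalty h M zstar v) \<le> tangent_penalty h M zstar (l *\<^sub>R (x - zstar))"
    by (rule cINF_lower) (auto intro: bdd_belowI2 tangent_penalty_nonneg)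
  also have "\<dots> \<le> P l x"
    using assms convex_h differentiable_h by (intro tangent_penalty_le_softplus_penalty) auto
  finally show ?thesis .
qed

theorem tendsto_argmin: "(z \<longlongrightarrow> zstar) at_top"
proof (rule tendstoI)
  fix \<epsilon> :: real assume "\<epsilon> > 0"
  define \<delta> where "\<delta> = c * \<epsilon>\<^sup>2 / 32"
  have "\<delta> > 0" and \<delta>: "4 * \<delta> = c / 2 * (\<epsilon> / 2)\<^sup>2"
    using c_pos \<open>\<epsilon> > 0\<close> by (simp_all add: \<delta>_def power_divide)
  define s where "s = (INF v. tangent_penalty h M zstar v)"
  obtain v where v: "tangent_penalty h M zstar v < s + \<delta>"
    using cInf_lessD[of "range (tangent_penalty h M zstar)" "s + \<delta>"] \<open>\<delta> > 0\<close>
    unfolding s_def by auto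
  define y where "y l = zstar + (1 / l) *\<^sub>R v" for l
  have "((\<lambda>l. q (y l)) \<longlongrightarrow> q zstar) at_top"
    unfolding y_def by (intro tendsto_intros tendsto_line_at_top)
  then have "eventually (\<lambda>l. q (y l) < q zstar + \<delta>) at_top"
    using \<open>\<delta> > 0\<close> by (intro order_tendstoD(2)) auto
  moreover have "eventually (\<lambda>l. P l (y l) < tangent_penalty h M zstar v + \<delta>) at_top"
    unfolding y_def using \<open>\<delta> > 0\<close>
    by (intro order_tendstoD(2)[OF tendsto_softplus_penalty_tangent_penalty]
        zstar_feasible differentiable_h) auto
  moreover have "eventually (\<lambda>l. dist (y l) zstar < \<epsilon> / 2) at_top"
    unfolding y_def using \<open>\<epsilon> > 0\<close> by (intro tendstoD tendsto_line_at_top) auto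
  ultimately show "eventually (\<lambda>l. dist (z l) zstar < \<epsilon>) at_top"
    using eventually_objective_z_gt[OF \<open>\<delta> > 0\<close>] eventually_gt_at_top[of 0]
  proof eventually_elim
    case (elim l)
    then have "c / 2 * (norm (y l - z l))\<^sup>2 < c / 2 * (\<epsilon> / 2)\<^sup>2"
      using z_argmin_quadratic_growth[of l "y l"] inf_tangent_penalty_le_softplus_penalty[of l "z l"]
        v \<delta> unfolding s_def by linarith
    then have "(norm (y l - z l))\<^sup>2 < (\<epsilon> / 2)\<^sup>2"
      using c_pos by simp
    then have "norm (y l - z l) < \<epsilon> / 2"
      by (rule power2_less_imp_less) (use \<open>\<epsilon> > 0\<close> in simp)
    then have "dist (z l) (y l) < \<epsilon> / 2"
      by (simp add: dist_norm norm_minus_commute)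
    with elim show ?case
      using dist_triangle[of "z l" zstar "y l"] by linarith
  qed
qed

end

lemma twice_cont_diff_imp_differentiable: "twice_cont_diff h \<Longrightarrow> h differentiable at x"
  unfolding twice_cont_diff_def differentiable_def by blast

theorem proposition4:
  fixes W :: "('j::finite, 'k::finite) mat set"
    and g w lam xi zp :: "('j, 'k) mat"
    and rho delta :: real
    and M :: nat
    and h :: "nat \<Rightarrow> ('j, 'k) mat \<Rightarrow> real"
    and zstar :: "('j, 'k) mat"
    and zl :: "real \<Rightarrow> ('j, 'k) mat"
  assumes rho_pos: "rho > 0" and delta_pos: "delta > 0"
    and W_compact: "compact W" and W_convex: "convex W"
    and h_convex: "\<And>m. m \<in> {1..M} \<Longrightarrow> convex_on UNIV (h m)"
    and h_C2: "\<And>m. m \<in> {1..M} \<Longrightarrow> twice_cont_diff (h m)"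
    and feasible: "W \<inter> cball zp delta = {z. \<forall>m\<in>{1..M}. h m z \<le> 0}"
    and zstar_min: "is_arg_min (Phi g w lam xi rho) (\<lambda>z. z \<in> W \<inter> cball zp delta) zstar"
    and zl_min: "\<And>l. l > 0 \<Longrightarrow>
        is_arg_min (\<lambda>z. Phi g w lam xi rho z + softplus_penalty h M l z) (\<lambda>z. True) (zl l)"
  shows "(zl \<longlongrightarrow> zstar) at_top"
proof -
  define c where "c = w + (1 / rho) *\<^sub>R (lam - xi)"
  define u where "u = c - (1 / rho) *\<^sub>R g"
  define k where "k = inner g c - (norm g)\<^sup>2 / (2 * rho)"
  have Phi_eq: "Phi g w lam xi rho x = rho / 2 * (norm (x - u))\<^sup>2 + k" for x
  proof -
    have "Phi g w lam xi rho x = inner g x + rho / 2 * (norm (c - x))\<^sup>2"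
      unfolding Phi_def c_def by (simp add: algebra_simps)
    also have "\<dots> = rho / 2 * (norm (x - u))\<^sup>2 + k"
      unfolding u_def k_def using rho_pos by (intro inner_plus_quadratic_complete_square) simp
    finally show ?thesis .
  qed
  \<comment> \<open>\<open>W\<close> and \<open>delta\<close> enter only through \<open>feasible\<close>.\<close>
  interpret softplus_penalty_method "rho / 2" u h M zstar zl
  proof
    show "rho / 2 > 0"
      using rho_pos by simp
    show "convex_on UNIV (h m)" and "h m differentiable at zstar" if "m \<in> {1..M}" for m
      using h_convex h_C2 twice_cont_diff_imp_differentiable that by auto
    show "is_arg_min (\<lambda>x. rho / 2 * (norm (x - u))\<^sup>2) (\<lambda>x. \<forall>m\<in>{1..M}. h m x \<le> 0) zstar"
      using zstar_min unfolding feasible by (simp add: Phi_eq is_arg_min_linorder)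
    show "is_arg_min (\<lambda>x. rho / 2 * (norm (x - u))\<^sup>2 + softplus_penalty h M l x) (\<lambda>_. True) (zl l)"
      if "l > 0" for l
      using zl_min[OF that] by (simp add: Phi_eq is_arg_min_linorder)
  qed
  show ?thesis
    by (rule tendsto_argmin)
qed

end
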